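(* Let $\mathcal{C}\subseteq\mathbb{F}_q^n$ be a linear code of dimension $k\ge1$ and minimum distance $d\ge2$, and $J=n-k-d+2$. Let $\mathbf{h}_1,\dots,\mathbf{h}_m\in\mathcal{C}^\perp$ be linearly independent with $m>J$, and let $\mathcal{S}_j=\operatorname{supp}(\mathbf{h}_j)$. Assume $\mathcal{S}_1,\dots,\mathcal{S}_J$ are pairwise disjoint, let $\mathcal{U}=\mathcal{S}_1\cup\cdots\cup\mathcal{S}_J$ and $\theta=n-|\mathcal{U}|$, and assume $\theta\in[1,d-2]$. For $i\in[J+1,m]$ let $\theta_i=|\mathcal{S}_i\setminus\mathcal{U}|$ and assume $\theta_i\ge1$. Then for every $i\in[J+1,m]$ and every $l\in[1,J]$ with $|\mathcal{S}_l|>\theta_i$, $$|\mathcal{S}_i\cap\mathcal{S}_l|\ \ge\ |\mathcal{S}_l|-\theta_i+\theta-d+2 .$$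
   Context: $\operatorname{supp}(\mathbf{h})=\{l\in[1,n]:h_l\neq0\}$; $\mathcal{C}^\perp$ is the dual code; $[a,b]=\{a,\dots,b\}$. *)

theory Defs
  imports Complex_Main "HOL-Library.Function_Algebras"
begin

text \<open>Vectors of F_q^n are functions from a finite coordinate type 'n (with n = CARD('n))
  into a finite field 'a. Scalar multiplication is componentwise.\<close>

definition fscale :: "'a::field \<Rightarrow> ('n \<Rightarrow> 'a) \<Rightarrow> ('n \<Rightarrow> 'a)" where
  "fscale c v = (\<lambda>i. c * v i)"

lemma vector_space_fscale: "vector_space (fscale :: 'a::field \<Rightarrow> ('n \<Rightarrow> 'a) \<Rightarrow> _)"
  by unfold_locales (auto simp: fscale_def fun_eq_iff algebra_simps)

definition linear_code :: "('n \<Rightarrow> 'a::field) set \<Rightarrow> bool" where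
  "linear_code C = module.subspace fscale C"

definition code_dim :: "('n \<Rightarrow> 'a::field) set \<Rightarrow> nat" where
  "code_dim C = vector_space.dim fscale C"

definition supp :: "('n \<Rightarrow> 'a::zero) \<Rightarrow> 'n set" where
  "supp v = {l. v l \<noteq> 0}"

definition hweight :: "('n::finite \<Rightarrow> 'a::zero) \<Rightarrow> nat" where
  "hweight v = card (supp v)"

text \<open>Minimum distance of a linear code = minimum weight of a nonzero codeword.\<close>
definition min_dist :: "('n::finite \<Rightarrow> 'a::field) set \<Rightarrow> nat" where
  "min_dist C = Min (hweight ` (C - {0}))"

definition dual_code :: "('n::finite \<Rightarrow> 'a::field) set \<Rightarrow> ('n \<Rightarrow> 'a) set" where
  "dual_code C = {h. \<forall>c\<in>C. (\<Sum>i\<in>UNIV. h i * c i) = 0}"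

definition lin_indep :: "('n \<Rightarrow> 'a::field) set \<Rightarrow> bool" where
  "lin_indep S = module.independent fscale S"

end

theory Submission
  imports Defs
begin

text \<open>If the inequality failed, the set T of coordinates lying in \<open>S\<^sub>l \<setminus> S\<^sub>i\<close> or outside
  \<open>\<U> \<union> S\<^sub>i\<close> would have at least \<open>d - 1\<close> elements. No nonzero codeword is supported on
  \<open>d - 1\<close> of them, so a basis of C together with the corresponding unit vectors is
  independent, of size \<open>k + d - 1\<close>. The J independent vectors \<open>h\<^sub>i\<close> and \<open>h\<^sub>j\<close>
  (\<open>j \<in> [1,J] \<setminus> {l}\<close>) are orthogonal to all of them: to C as dual codewords and to the unit
  vectors because they vanish on T (the \<open>S\<^sub>j\<close> are disjoint from \<open>S\<^sub>l\<close> and contained in \<open>\<U>\<close>).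
  Hence \<open>k + d - 1 + J \<le> n\<close>, contradicting \<open>J = n - k - d + 2\<close>.\<close>

context vector_space
begin

lemma independent_Un:
  assumes "finite B" and "independent A" and "independent B" and "span A \<inter> span B = {0}"
  shows "independent (A \<union> B)"
  using assms(1,3,4)
proof (induction B rule: finite_induct)
  case empty
  then show ?case using assms(2) by simp
next
  case (insert b B)
  have indB: "independent B" and b: "b \<notin> span B"
    using insert.prems(1) insert.hyps(2) by (auto simp: independent_insert)
  have "span A \<inter> span B = {0}"
    using insert.prems(2) span_mono[of B "insert b B"] span_zero by blast
  then have IH: "independent (A \<union> B)" using insert.IH indB by blast
  have "b \<notin> span (A \<union> B)"
  proof
    assume "b \<in> span (A \<union> B)"
    then obtain a y where a: "a \<in> span A" and y: "y \<in> span B" and "b = a + y"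
      by (auto simp: span_Un)
    then have "a = b - y" by simp
    also have "\<dots> \<in> span (insert b B)"
      using y span_mono[of B "insert b B"] by (intro span_diff) (auto intro: span_base)
    finally have "a = 0" using a insert.prems(2) by blast
    with \<open>b = a + y\<close> y b show False by simp
  qed
  then show ?case using IH by (simp add: independent_insertI)
qed

end

interpretation fs: vector_space "fscale :: 'a::field \<Rightarrow> ('n \<Rightarrow> 'a) \<Rightarrow> _"
  by (rule vector_space_fscale)

lemma sum_fun_apply: "(\<Sum>x\<in>A. f x) i = (\<Sum>x\<in>A. f x i)"
  by (induction A rule: infinite_finite_induct) auto

lemma subspace_supp_subset: "fs.subspace {v :: 'n \<Rightarrow> 'a::field. supp v \<subseteq> T}"
  unfolding fs.subspace_def supp_def fscale_def by (auto simp: subset_iff) (metis add.right_neutral)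

definition unit_vec :: "'n \<Rightarrow> 'n \<Rightarrow> 'a::zero_neq_one" where
  "unit_vec t = (\<lambda>j. if j = t then 1 else 0)"

lemma supp_unit_vec [simp]: "supp (unit_vec t :: 'n \<Rightarrow> 'a::zero_neq_one) = {t}"
  by (auto simp: supp_def unit_vec_def)

lemma inj_unit_vec: "inj (unit_vec :: 'n \<Rightarrow> 'n \<Rightarrow> 'a::zero_neq_one)"
  by (rule injI) (metis singleton_inject supp_unit_vec)

lemma sum_mult_unit_vec: "(\<Sum>j\<in>UNIV. g j * unit_vec t j) = (g t :: 'a::semiring_1)"
  for t :: "'n::finite"
  by (simp add: unit_vec_def if_distrib cong: if_cong)

lemma fun_eq_sum_unit_vec: "v = (\<Sum>t\<in>UNIV. fscale (v t) (unit_vec t))"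
  for v :: "'n::finite \<Rightarrow> 'a::field"
  by (rule ext) (simp add: sum_fun_apply fscale_def unit_vec_def if_distrib cong: if_cong)

lemma span_unit_vec_subset: "fs.span (unit_vec ` T) \<subseteq> {v :: 'n \<Rightarrow> 'a::field. supp v \<subseteq> T}"
  by (rule fs.span_minimal[OF _ subspace_supp_subset]) auto

lemma independent_unit_vec:
  fixes T :: "'n::finite set"
  shows "fs.independent (unit_vec ` T :: ('n \<Rightarrow> 'a::field) set)"
proof (rule fs.independent_if_scalars_zero)
  fix f and x :: "'n \<Rightarrow> 'a"
  assume sum0: "(\<Sum>y\<in>unit_vec ` T. fscale (f y) y) = (0 :: 'n \<Rightarrow> 'a)"
    and "x \<in> unit_vec ` T"
  then obtain t where "t \<in> T" and x: "x = unit_vec t" by blast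
  have "0 = (\<Sum>y\<in>unit_vec ` T. fscale (f y) y) t" using sum0 by simp
  also have "\<dots> = (\<Sum>y\<in>unit_vec ` T. if y = x then f y else 0)"
    unfolding sum_fun_apply
    by (intro sum.cong) (auto simp: x fscale_def unit_vec_def split: if_splits)
  also have "\<dots> = f x" using \<open>t \<in> T\<close> by (simp add: x)
  finally show "f x = 0" by simp
qed simp

lemma independent_finite_card_le:
  fixes B :: "('n::finite \<Rightarrow> 'a::field) set"
  assumes "fs.independent B"
  shows "finite B" and "card B \<le> card (UNIV :: 'n set)"
proof -
  have span: "B \<subseteq> fs.span (range unit_vec)"
  proof
    fix v :: "'n \<Rightarrow> 'a" show "v \<in> fs.span (range unit_vec)"
      by (subst fun_eq_sum_unit_vec) (intro fs.span_sum fs.span_scale fs.span_base, simp)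
  qed
  show "finite B"
    using fs.independent_span_bound[OF _ assms span] by simp
  have "card B \<le> card (range (unit_vec :: 'n \<Rightarrow> 'n \<Rightarrow> 'a))"
    using fs.independent_span_bound[OF _ assms span] by simp
  also have "\<dots> \<le> card (UNIV :: 'n set)" by (rule card_image_le) simp
  finally show "card B \<le> card (UNIV :: 'n set)" .
qed

text \<open>Row rank is at most column rank: the functionals in Y span all coordinate functionals
  restricted to G.\<close>

lemma card_independent_le_if_coordinates_combine:
  fixes G :: "('n \<Rightarrow> 'a::field) set" and Y :: "(('n \<Rightarrow> 'a) \<Rightarrow> 'a) set"
  assumes "fs.independent G" and "finite Y"
    and "\<And>i. \<exists>u. \<forall>g\<in>G. g i = (\<Sum>y\<in>Y. u y * y g)"
  shows "card G \<le> card Y"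
proof -
  obtain u where u: "\<And>i g. g \<in> G \<Longrightarrow> g i = (\<Sum>y\<in>Y. u i y * y g)"
    using assms(3) by metis
  define w where "w y = (\<lambda>i. u i y)" for y
  have "G \<subseteq> fs.span (w ` Y)"
  proof
    fix g assume "g \<in> G"
    then have "g = (\<Sum>y\<in>Y. fscale (y g) (w y))"
      by (auto simp: fun_eq_iff sum_fun_apply fscale_def w_def u mult.commute)
    also have "\<dots> \<in> fs.span (w ` Y)"
      by (intro fs.span_sum fs.span_scale) (auto intro: fs.span_base)
    finally show "g \<in> fs.span (w ` Y)" .
  qed
  then have "card G \<le> card (w ` Y)"
    using fs.independent_span_bound[OF _ assms(1)] assms(2) by auto
  also have "\<dots> \<le> card Y" using assms(2) by (rule card_image_le)
  finally show ?thesis .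
qed

lemma card_independent_add_card_orthogonal_le:
  fixes K G :: "('n::finite \<Rightarrow> 'a::field) set"
  assumes K: "fs.independent K" and G: "fs.independent G"
    and orth: "\<forall>g\<in>G. \<forall>x\<in>K. (\<Sum>i\<in>UNIV. g i * x i) = 0"
  shows "card K + card G \<le> card (UNIV :: 'n set)"
proof -
  define L :: "('n \<Rightarrow> 'a) \<Rightarrow> ('n \<Rightarrow> 'a) \<Rightarrow> 'a" where
    "L x = (\<lambda>g. if g \<in> G then (\<Sum>i\<in>UNIV. g i * x i) else 0)" for x
  \<comment> \<open>L kills K, so after extending K to a basis B its image is spanned by the
    \<open>card (B - K) = n - card K\<close> functionals in Y; the coordinates of each \<open>g \<in> G\<close> are
    recovered from L at the unit vectors.\<close>
  have hom: "module_hom fscale fscale L"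
    unfolding linear_iff_module_hom[symmetric] Vector_Spaces.linear_iff
  proof (intro conjI allI vector_space_fscale)
    show "L (x + y) = L x + L y" for x y
      by (rule ext) (simp add: L_def distrib_left sum.distrib)
    show "L (fscale c x) = fscale c (L x)" for c x
      by (rule ext) (simp add: L_def fscale_def sum_distrib_left algebra_simps)
  qed
  obtain B where "K \<subseteq> B" and B: "fs.independent B" and "UNIV \<subseteq> fs.span B"
    by (rule fs.maximal_independent_subset_extend[OF subset_UNIV K])
  define Y where "Y = L ` (B - K)"
  have finB: "finite B" and card_B: "card B \<le> card (UNIV :: 'n set)"
    using independent_finite_card_le[OF B] by auto
  have span_Y: "L x \<in> fs.span Y" for x
  proof -
    have "L x \<in> L ` fs.span B" using \<open>UNIV \<subseteq> fs.span B\<close> by blast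
    also have "\<dots> = fs.span (L ` B)" by (rule module_hom.span_image[OF hom, symmetric])
    also have "\<dots> \<subseteq> fs.span (insert 0 Y)"
    proof (rule fs.span_mono)
      have "L b = 0" if "b \<in> K" for b
        using orth that by (auto simp: L_def fun_eq_iff)
      then show "L ` B \<subseteq> insert 0 Y" by (auto simp: Y_def)
    qed
    finally show ?thesis by simp
  qed
  have "card G \<le> card Y"
  proof (rule card_independent_le_if_coordinates_combine[OF G])
    show "finite Y" using finB by (simp add: Y_def)
    fix i
    obtain u where "L (unit_vec i) = (\<Sum>y\<in>Y. fscale (u y) y)"
      using span_Y[of "unit_vec i"] unfolding fs.span_finite[OF \<open>finite Y\<close>] by blast
    then have "L (unit_vec i) g = (\<Sum>y\<in>Y. u y * y g)" for g
      by (simp add: sum_fun_apply fscale_def)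
    moreover have "L (unit_vec i) g = g i" if "g \<in> G" for g
      using that by (simp add: L_def sum_mult_unit_vec)
    ultimately have "\<forall>g\<in>G. g i = (\<Sum>y\<in>Y. u y * y g)" by simp
    then show "\<exists>u. \<forall>g\<in>G. g i = (\<Sum>y\<in>Y. u y * y g)" by blast
  qed
  also have "\<dots> \<le> card (B - K)" unfolding Y_def using finB by (simp add: card_image_le)
  also have "\<dots> = card B - card K"
    using \<open>K \<subseteq> B\<close> finB by (simp add: card_Diff_subset finite_subset)
  finally show ?thesis using card_B card_mono[OF finB \<open>K \<subseteq> B\<close>] by linarith
qed


lemma code_dim_add_card_le:
  fixes C :: "('n::finite \<Rightarrow> 'a::field) set"
  assumes C: "linear_code C" and no_codeword: "\<forall>c\<in>C. supp c \<subseteq> T \<longrightarrow> c = 0"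
    and G: "fs.independent G" and G_dual: "G \<subseteq> dual_code C"
    and G_vanish: "\<forall>g\<in>G. supp g \<inter> T = {}"
  shows "code_dim C + card T + card G \<le> card (UNIV :: 'n set)"
proof -
  obtain BC where "BC \<subseteq> C" and BC: "fs.independent BC" and "C \<subseteq> fs.span BC"
    and card_BC: "card BC = code_dim C"
    unfolding code_dim_def by (rule fs.basis_exists)
  define E where "E = (unit_vec :: 'n \<Rightarrow> 'n \<Rightarrow> 'a) ` T"
  have E: "fs.independent E" and card_E: "card E = card T"
    unfolding E_def by (rule independent_unit_vec) (simp add: card_image inj_on_subset[OF inj_unit_vec])
  have span_BC: "fs.span BC \<subseteq> C"
    using C \<open>BC \<subseteq> C\<close> unfolding linear_code_def by (rule fs.span_minimal[rotated])
  have "x = 0" if "x \<in> fs.span BC" and "x \<in> fs.span E" for x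
    using that span_BC span_unit_vec_subset[of T] no_codeword unfolding E_def by blast
  then have span_Int: "fs.span BC \<inter> fs.span E = {0}"
    using fs.span_zero by blast
  have "x \<notin> E" if "x \<in> BC" for x
  proof
    assume "x \<in> E"
    with that have "x \<in> fs.span BC \<inter> fs.span E" by (simp add: fs.span_base)
    with span_Int have "x = 0" by simp
    with that BC show False using fs.dependent_zero by blast
  qed
  then have "BC \<inter> E = {}" by blast
  then have "card (BC \<union> E) = code_dim C + card T"
    using independent_finite_card_le(1)[OF BC] card_BC card_E
    by (simp add: card_Un_disjoint E_def)
  moreover have "fs.independent (BC \<union> E)"
    by (rule fs.independent_Un[OF _ BC E span_Int]) (simp add: E_def)
  moreover have "(\<Sum>i\<in>UNIV. g i * x i) = 0" if "g \<in> G" and "x \<in> BC \<union> E" for g x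
    using that G_dual G_vanish \<open>BC \<subseteq> C\<close>
    by (auto simp: dual_code_def E_def sum_mult_unit_vec supp_def dest!: subsetD)
  ultimately show ?thesis
    using card_independent_add_card_orthogonal_le[OF _ G] by fastforce
qed

lemma eq_0_if_supp_subset_card_less_min_dist:
  fixes C :: "('n::finite \<Rightarrow> 'a::{field,finite}) set"
  assumes "c \<in> C" and "supp c \<subseteq> T" and "card T < min_dist C"
  shows "c = 0"
proof (rule ccontr)
  assume "c \<noteq> 0"
  with \<open>c \<in> C\<close> have "min_dist C \<le> hweight c"
    unfolding min_dist_def by (intro Min_le) auto
  also have "\<dots> \<le> card T"
    unfolding hweight_def using \<open>supp c \<subseteq> T\<close> by (simp add: card_mono)
  finally show False using \<open>card T < min_dist C\<close> by simp
qed

lemma card_Diff_Un_Compl_Diff: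
  fixes A B U :: "'n::finite set"
  assumes "A \<subseteq> U"
  shows "card ((A - B) \<union> (- U - B)) + card (A \<inter> B) + card (B - U)
           = card A + (card (UNIV :: 'n set) - card U)"
proof -
  have "card ((A - B) \<union> (- U - B)) = card (A - B) + card (- U - B)"
    using assms by (intro card_Un_disjoint) auto
  moreover have "card A = card (A \<inter> B) + card (A - B)"
    by (rule card_Int_Diff) simp
  moreover have "card (- U) = card (B - U) + card (- U - B)"
    using card_Int_Diff[of "- U" B] by (simp add: Int_commute Diff_eq)
  moreover have "card (- U) = card (UNIV :: 'n set) - card U"
    using card_Diff_subset[of U UNIV] by (simp add: Compl_eq_Diff_UNIV)
  ultimately show ?thesis by linarith
qed

theorem lemma5:
  fixes C :: "('n::finite \<Rightarrow> 'a::{field,finite}) set"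
    and k d J m :: nat
    and h :: "nat \<Rightarrow> ('n \<Rightarrow> 'a)"
  assumes lin: "linear_code C"
    and kdim: "code_dim C = k" and k1: "k \<ge> 1"
    and dd: "min_dist C = d" and d2: "d \<ge> 2"
    and Jdef: "int J = int (card (UNIV :: 'n set)) - int k - int d + 2"
    and hdual: "\<forall>j\<in>{1..m}. h j \<in> dual_code C"
    and hinj: "inj_on h {1..m}"
    and hind: "lin_indep (h ` {1..m})"
    and mJ: "m > J"
    and disj: "\<forall>j\<in>{1..J}. \<forall>j'\<in>{1..J}. j \<noteq> j' \<longrightarrow> supp (h j) \<inter> supp (h j') = {}"
    and theta: "1 \<le> card (UNIV :: 'n set) - card (\<Union>j\<in>{1..J}. supp (h j))"
               "card (UNIV :: 'n set) - card (\<Union>j\<in>{1..J}. supp (h j)) \<le> d - 2"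
    and thetai: "\<forall>i\<in>{J+1..m}. card (supp (h i) - (\<Union>j\<in>{1..J}. supp (h j))) \<ge> 1"
  shows "\<forall>i\<in>{J+1..m}. \<forall>l\<in>{1..J}.
           card (supp (h l)) > card (supp (h i) - (\<Union>j\<in>{1..J}. supp (h j))) \<longrightarrow>
           int (card (supp (h i) \<inter> supp (h l)))
             \<ge> int (card (supp (h l))) - int (card (supp (h i) - (\<Union>j\<in>{1..J}. supp (h j))))
                + int (card (UNIV :: 'n set) - card (\<Union>j\<in>{1..J}. supp (h j))) - int d + 2"
proof (intro ballI impI, rule ccontr, goal_cases)
  case (1 i l)
  then have i: "i \<in> {J+1..m}" and l: "l \<in> {1..J}" by simp_all
  define U where "U = (\<Union>j\<in>{1..J}. supp (h j))"
  define T where "T = (supp (h l) - supp (h i)) \<union> (- U - supp (h i))"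
  have "supp (h l) \<subseteq> U" using l unfolding U_def by blast
  from card_Diff_Un_Compl_Diff[OF this, of "supp (h i)"] 1(4) d2
  have "d - 1 \<le> card T" unfolding T_def U_def by (simp add: Int_commute)
  then obtain T' where "T' \<subseteq> T" and card_T': "card T' = d - 1"
    by (rule obtain_subset_with_card_n)
  have no_codeword: "\<forall>c\<in>C. supp c \<subseteq> T' \<longrightarrow> c = 0"
    using card_T' d2 dd by (auto intro: eq_0_if_supp_subset_card_less_min_dist)
  define I where "I = insert i ({1..J} - {l})"
  have I: "I \<subseteq> {1..m}" and card_I: "card I = J"
    using i l by (auto simp: I_def card_insert_if)
  have G: "fs.independent (h ` I)"
    using hind I unfolding lin_indep_def by (meson fs.independent_mono image_mono)
  have G_dual: "h ` I \<subseteq> dual_code C" using hdual I by auto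
  have "supp (h j) \<inter> T = {}" if "j \<in> I" for j
  proof (cases "j = i")
    case False
    with that have "j \<in> {1..J}" and "j \<noteq> l" by (auto simp: I_def)
    then have "supp (h j) \<inter> supp (h l) = {}" and "supp (h j) \<subseteq> U"
      using disj l unfolding U_def by auto
    then show ?thesis unfolding T_def by blast
  qed (auto simp: T_def)
  then have G_vanish: "\<forall>g\<in>h ` I. supp g \<inter> T' = {}" using \<open>T' \<subseteq> T\<close> by blast
  from code_dim_add_card_le[OF lin no_codeword G G_dual G_vanish]
  have "k + (d - 1) + J \<le> card (UNIV :: 'n set)"
    using kdim card_T' card_image[OF inj_on_subset[OF hinj I]] card_I by simp
  then show False using Jdef d2 by linarith
qed

end
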